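(* Let $\mathscr{M}$ be a von Neumann algebra. The set of unitaries $U \in \mathcal{U}(\mathscr{M})$ whose spectrum is contained in $C_k$ for some $k \in \{1,2,3,4\}$ is an open subset of $\mathcal{U}(\mathscr{M})$ in the norm (uniform) topology. Consequently, the norm-closure of $\mathcal{S}(\mathscr{M})^3$ is not equal to $\mathcal{U}(\mathscr{M})$; i.e. the set of products of three symmetries in $\mathscr{M}$ is not norm-dense in $\mathcal{U}(\mathscr{M})$.
   Context: $\mathcal{U}(\mathscr{M})$ is the unitary group of $\mathscr{M}$; a symmetry is a self-adjoint unitary; $\mathcal{S}(\mathscr{M})^3$ is the set of unitaries in $\mathscr{M}$ that are products of three symmetries in $\mathscr{M}$. For $1 \le k \le 4$, $C_k := \{\exp(2\pi i \alpha) : \tfrac{k-1}{4} < \alpha < \tfrac{k}{4}\}$, the four connected components of $S^1 \setminus \{1, i, -1, -i\}$, where $S^1$ is the unit circle in $\mathbb{C}$. *)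

theory Defs
  imports "HOL-Analysis.Analysis"
begin

text \<open>A complex Hilbert space: a complete real normed vector space together with a
complex scalar multiplication extending the real one and a complex inner product
(linear in the second argument, conjugate-linear in the first) inducing the norm.\<close>

class complex_hilbert = real_normed_vector + complete_space +
  fixes cscale :: "complex \<Rightarrow> 'a \<Rightarrow> 'a"
    and cinner :: "'a \<Rightarrow> 'a \<Rightarrow> complex"
  assumes cscale_add_right: "cscale c (x + y) = cscale c x + cscale c y"
    and cscale_add_left: "cscale (c + d) x = cscale c x + cscale d x"
    and cscale_cscale: "cscale c (cscale d x) = cscale (c * d) x"
    and cscale_of_real: "cscale (complex_of_real r) x = r *\<^sub>R x"
    and cinner_conj: "cinner x y = cnj (cinner y x)"
    and cinner_add_right: "cinner x (y + z) = cinner x y + cinner x z"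
    and cinner_cscale_right: "cinner x (cscale c y) = c * cinner x y"
    and cinner_self: "cinner x x = complex_of_real ((norm x)\<^sup>2)"

definition bounded_clinear :: "('a::complex_hilbert \<Rightarrow> 'a) \<Rightarrow> bool" where
  "bounded_clinear T \<longleftrightarrow> bounded_linear T \<and> (\<forall>c x. T (cscale c x) = cscale c (T x))"

definition adj :: "('a::complex_hilbert \<Rightarrow> 'a) \<Rightarrow> ('a \<Rightarrow> 'a)" where
  "adj T = (THE S. \<forall>x y. cinner (T x) y = cinner x (S y))"

definition commutant :: "('a::complex_hilbert \<Rightarrow> 'a) set \<Rightarrow> ('a \<Rightarrow> 'a) set" where
  "commutant A = {T. bounded_clinear T \<and> (\<forall>S\<in>A. T \<circ> S = S \<circ> T)}"

text \<open>Von Neumann algebra: a self-adjoint set of bounded operators on a Hilbert space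
equal to its bicommutant (equivalently, by the bicommutant theorem, a unital
SOT-closed *-subalgebra of B(H)).\<close>

definition von_neumann_algebra :: "('a::complex_hilbert \<Rightarrow> 'a) set \<Rightarrow> bool" where
  "von_neumann_algebra M \<longleftrightarrow>
     (\<forall>T\<in>M. bounded_clinear T) \<and> (\<forall>T\<in>M. adj T \<in> M) \<and> commutant (commutant M) = M"

definition unitaries :: "('a::complex_hilbert \<Rightarrow> 'a) set \<Rightarrow> ('a \<Rightarrow> 'a) set" where
  "unitaries M = {U\<in>M. adj U \<circ> U = id \<and> U \<circ> adj U = id}"

definition symmetries :: "('a::complex_hilbert \<Rightarrow> 'a) set \<Rightarrow> ('a \<Rightarrow> 'a) set" where
  "symmetries M = {S\<in>unitaries M. adj S = S}"

definition sym_cube :: "('a::complex_hilbert \<Rightarrow> 'a) set \<Rightarrow> ('a \<Rightarrow> 'a) set" where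
  "sym_cube M = {U\<in>unitaries M. \<exists>A\<in>symmetries M. \<exists>B\<in>symmetries M. \<exists>C\<in>symmetries M.
                    U = A \<circ> B \<circ> C}"

definition spectrum_in :: "('a::complex_hilbert \<Rightarrow> 'a) set \<Rightarrow> ('a \<Rightarrow> 'a) \<Rightarrow> complex set" where
  "spectrum_in M T = {z. \<not> (\<exists>S\<in>M. S \<circ> (\<lambda>x. T x - cscale z x) = id
                                  \<and> (\<lambda>x. T x - cscale z x) \<circ> S = id)}"

definition arc :: "nat \<Rightarrow> complex set" where
  "arc k = {exp (2 * of_real pi * \<i> * of_real \<alpha>) | \<alpha>::real.
              (real k - 1) / 4 < \<alpha> \<and> \<alpha> < real k / 4}"

definition norm_open_in :: "('a::complex_hilbert \<Rightarrow> 'a) set \<Rightarrow> ('a \<Rightarrow> 'a) set \<Rightarrow> bool" where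
  "norm_open_in X G \<longleftrightarrow> G \<subseteq> X \<and>
     (\<forall>U\<in>G. \<exists>e>0. \<forall>V\<in>X. onorm (\<lambda>x. V x - U x) < e \<longrightarrow> V \<in> G)"

definition norm_closure :: "('a::complex_hilbert \<Rightarrow> 'a) set \<Rightarrow> ('a \<Rightarrow> 'a) set" where
  "norm_closure A = {T. bounded_clinear T \<and> (\<forall>e>0. \<exists>S\<in>A. onorm (\<lambda>x. S x - T x) < e)}"

end

theory Submission
  imports Defs
begin

(*
  The spectrum of a unitary lies on the unit circle. If it lies in the open arc C_k,
  then U - z is invertible for every z in the compact set K = S^1 - C_k; by compactness and a
  Neumann series argument the inverses are uniformly bounded on K, say by r. Another Neumann
  series shows that V - z stays invertible for all z in K whenever the operator norm of V - U is
  below 1/r, so the spectrum of such a unitary V again lies in C_k.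

  Let l = exp(i pi/4) and suppose that ABC is within e of the scalar unitary l,
  with A, B, C symmetries. Put P = BA. Then C is within e of l P, and C^2 = 1 makes P^2 within
  2e of mu = l^-2 = -i. Conjugating by B, also P^-2 = B P^2 B is within 2e of mu, while inverting
  the isometry P^2 shows that P^-2 is within 2e of mu^-1 = i. Hence 2 = |i - (-i)| <= 4e, so the
  scalar unitary l has distance at least 1/2 from S(M)^3.
*)

section \<open>Inner product geometry\<close>

subclass (in complex_hilbert) banach ..

lemma cinner_add_left: "cinner (x + (y::'a::complex_hilbert)) z = cinner x z + cinner y z"
  by (metis cinner_conj cinner_add_right complex_cnj_add)

lemma cinner_cscale_left: "cinner (cscale c (x::'a::complex_hilbert)) y = cnj c * cinner x y"
  by (metis cinner_conj cinner_cscale_right complex_cnj_mult complex_cnj_cnj)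

lemma cinner_zero_right [simp]: "cinner (x::'a::complex_hilbert) 0 = 0"
  using cinner_add_right[of x 0 0] by simp

lemma cinner_zero_left [simp]: "cinner 0 (x::'a::complex_hilbert) = 0"
  using cinner_add_left[of 0 0 x] by simp

lemma cinner_minus_right: "cinner x (- (y::'a::complex_hilbert)) = - cinner x y"
  using cinner_add_right[of x y "-y"] by (simp add: add_eq_0_iff)

lemma cinner_diff_right: "cinner x (y - (z::'a::complex_hilbert)) = cinner x y - cinner x z"
  using cinner_add_right[of x y "-z"] cinner_minus_right[of x z] by simp

lemma cscale_one [simp]: "cscale 1 (x::'a::complex_hilbert) = x"
  using cscale_of_real[of 1 x] by simp

lemma cscale_zero [simp]: "cscale 0 (x::'a::complex_hilbert) = 0"
  using cscale_of_real[of 0 x] by simp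

lemma cscale_zero_right [simp]: "cscale c (0::'a::complex_hilbert) = 0"
  using cscale_add_right[of c 0 0] by simp

lemma cscale_minus_right: "cscale c (- (x::'a::complex_hilbert)) = - cscale c x"
  using cscale_add_right[of c x "-x"] by (simp add: add_eq_0_iff)

lemma cscale_diff_right: "cscale c (x - (y::'a::complex_hilbert)) = cscale c x - cscale c y"
  using cscale_add_right[of c x "-y"] cscale_minus_right[of c y] by simp

lemma cscale_minus_left: "cscale (- c) (x::'a::complex_hilbert) = - cscale c x"
  using cscale_add_left[of c "-c" x] by (simp add: add_eq_0_iff)

lemma cscale_diff_left: "cscale (c - d) (x::'a::complex_hilbert) = cscale c x - cscale d x"
  using cscale_add_left[of c "-d" x] cscale_minus_left[of d x] by simp

lemma scaleR_eq_cscale: "r *\<^sub>R (x::'a::complex_hilbert) = cscale (complex_of_real r) x"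
  by (simp add: cscale_of_real)

lemma cscale_scaleR: "cscale c (r *\<^sub>R (x::'a::complex_hilbert)) = r *\<^sub>R cscale c x"
  by (simp add: scaleR_eq_cscale cscale_cscale mult.commute)

lemma power2_norm_eq_cinner: "(norm (x::'a::complex_hilbert))\<^sup>2 = Re (cinner x x)"
  by (simp add: cinner_self)

lemma norm_eq_if_cinner_self_eq:
  fixes x y :: "'a::complex_hilbert"
  assumes "cinner x x = cinner y y"
  shows "norm x = norm y"
proof -
  have "complex_of_real ((norm x)\<^sup>2) = complex_of_real ((norm y)\<^sup>2)"
    using assms by (simp only: cinner_self)
  then have "(norm x)\<^sup>2 = (norm y)\<^sup>2"
    by (simp only: of_real_eq_iff)
  then show ?thesis
    by (simp add: power2_eq_iff_nonneg)
qed

lemma norm_cscale: "norm (cscale c (x::'a::complex_hilbert)) = cmod c * norm x"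
proof -
  have "cnj c * c = complex_of_real ((cmod c)\<^sup>2)"
    using complex_norm_square[of c] by (simp only: mult.commute)
  moreover have "cinner (cscale c x) (cscale c x) = cnj c * c * cinner x x"
    by (simp add: cinner_cscale_left cinner_cscale_right mult.assoc)
  ultimately have "complex_of_real ((norm (cscale c x))\<^sup>2) = complex_of_real ((cmod c * norm x)\<^sup>2)"
    by (simp add: cinner_self power_mult_distrib)
  then have "(norm (cscale c x))\<^sup>2 = (cmod c * norm x)\<^sup>2"
    by (simp only: of_real_eq_iff)
  then show ?thesis
    by (simp add: power2_eq_iff_nonneg)
qed

lemma bounded_linear_cscale: "bounded_linear (cscale c :: 'a::complex_hilbert \<Rightarrow> 'a)"
  by (rule bounded_linear_intro[where K = "cmod c"])
     (auto simp: cscale_add_right cscale_scaleR norm_cscale mult.commute)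

lemma power2_norm_add:
  "(norm (x + (y::'a::complex_hilbert)))\<^sup>2 = (norm x)\<^sup>2 + (norm y)\<^sup>2 + 2 * Re (cinner x y)"
proof -
  have "cinner x y + cinner y x = complex_of_real (2 * Re (cinner x y))"
    by (metis cinner_conj complex_add_cnj)
  moreover have "cinner (x + y) (x + y) = cinner x x + cinner y y + (cinner x y + cinner y x)"
    by (simp add: cinner_add_left cinner_add_right)
  ultimately show ?thesis
    by (simp add: power2_norm_eq_cinner)
qed

lemma power2_norm_diff:
  "(norm (x - (y::'a::complex_hilbert)))\<^sup>2 = (norm x)\<^sup>2 + (norm y)\<^sup>2 - 2 * Re (cinner x y)"
  using power2_norm_add[of x "-y"] by (simp add: cinner_minus_right)

lemma Re_cinner_le_norms: "Re (cinner (x::'a::complex_hilbert) y) \<le> norm x * norm y"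
proof (cases "x = 0 \<or> y = 0")
  case True
  then show ?thesis by auto
next
  case False
  let ?x = "cscale (complex_of_real (1 / norm x)) x"
  let ?y = "cscale (complex_of_real (1 / norm y)) y"
  have "0 \<le> (norm (?x - ?y))\<^sup>2"
    by simp
  moreover have "norm ?x = 1" "norm ?y = 1"
    using False by (simp_all add: norm_cscale norm_divide)
  ultimately have "Re (cinner ?x ?y) \<le> 1"
    by (simp add: power2_norm_diff)
  then have "Re (cinner x y) / (norm x * norm y) \<le> 1"
    by (simp add: cinner_cscale_left cinner_cscale_right mult.commute)
  then show ?thesis
    using False by (simp add: divide_le_eq)
qed

lemma cauchy_schwarz: "cmod (cinner (x::'a::complex_hilbert) y) \<le> norm x * norm y"
proof (cases "cinner x y = 0")
  case True
  then show ?thesis by simp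
next
  case False
  define u where "u = cnj (cinner x y) / cmod (cinner x y)"
  have "cnj (cinner x y) * cinner x y = complex_of_real ((cmod (cinner x y))\<^sup>2)"
    using complex_norm_square[of "cinner x y"] by (simp only: mult.commute)
  then have "cinner x (cscale u y) = complex_of_real (cmod (cinner x y))"
    by (simp add: cinner_cscale_right u_def power2_eq_square)
  then have "cmod (cinner x y) = Re (cinner x (cscale u y))"
    by simp
  also have "\<dots> \<le> norm x * norm (cscale u y)"
    by (rule Re_cinner_le_norms)
  finally show ?thesis
    using False by (simp add: norm_cscale u_def norm_divide)
qed

lemma cinner_ext: "(\<And>z. cinner z x = cinner z y) \<Longrightarrow> x = (y::'a::complex_hilbert)"
proof -
  assume "\<And>z. cinner z x = cinner z y"
  then have "cinner (x - y) (x - y) = 0"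
    by (simp add: cinner_diff_right)
  then show ?thesis
    by (simp add: cinner_self)
qed

lemma Cauchy_if_minimizing_in_convex:
  fixes S :: "'a::complex_hilbert set"
  assumes "convex S" and xs_in: "\<And>n. xs n \<in> S" and D_le: "\<And>a. a \<in> S \<Longrightarrow> D \<le> (norm a)\<^sup>2"
    and xs_norm: "\<And>n. (norm (xs n))\<^sup>2 < D + inverse (real (Suc n))"
  shows "Cauchy xs"
proof (rule CauchyI)
  have parallelogram: "(norm (a - b))\<^sup>2 \<le> 2 * (norm a)\<^sup>2 + 2 * (norm b)\<^sup>2 - 4 * D"
    if "a \<in> S" "b \<in> S" for a b
  proof -
    have "(1/2) *\<^sub>R a + (1/2) *\<^sub>R b \<in> S"
      using convexD[OF \<open>convex S\<close> that] by simp
    then have "D \<le> (norm ((1/2) *\<^sub>R (a + b)))\<^sup>2"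
      by (simp add: D_le scaleR_add_right)
    then have "4 * D \<le> (norm (a + b))\<^sup>2"
      by (simp add: power2_eq_square)
    then show ?thesis
      using power2_norm_add[of a b] power2_norm_diff[of a b] by simp
  qed
  fix e :: real
  assume "0 < e"
  then obtain m0 where m0: "inverse (real (Suc m0)) < e\<^sup>2 / 4"
    using reals_Archimedean[of "e\<^sup>2 / 4"] by auto
  have "norm (xs m - xs n) < e" if "m \<ge> m0" "n \<ge> m0" for m n
  proof -
    have "inverse (real (Suc m)) \<le> inverse (real (Suc m0))"
      "inverse (real (Suc n)) \<le> inverse (real (Suc m0))"
      using that by (simp_all add: le_imp_inverse_le)
    then have "(norm (xs m - xs n))\<^sup>2 < e\<^sup>2"
      using parallelogram[OF xs_in xs_in, of m n] xs_norm[of m] xs_norm[of n] m0 by linarith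
    then show ?thesis
      using \<open>0 < e\<close> by (simp add: power_less_imp_less_base)
  qed
  then show "\<exists>M. \<forall>m\<ge>M. \<forall>n\<ge>M. norm (xs m - xs n) < e"
    by blast
qed

lemma closed_convex_has_min_norm:
  fixes S :: "'a::complex_hilbert set"
  assumes "closed S" and "convex S" and "S \<noteq> {}"
  shows "\<exists>z\<in>S. \<forall>a\<in>S. norm z \<le> norm a"
proof -
  define N where "N = (\<lambda>x::'a. (norm x)\<^sup>2) ` S"
  define D where "D = Inf N"
  have bdd: "bdd_below N"
    unfolding N_def by (rule bdd_belowI[of _ 0]) auto
  have D_le: "D \<le> (norm a)\<^sup>2" if "a \<in> S" for a
    unfolding D_def using that bdd by (auto simp: N_def intro!: cInf_lower)
  have "\<exists>x\<in>S. (norm x)\<^sup>2 < D + inverse (real (Suc n))" for n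
  proof -
    have "Inf N < D + inverse (real (Suc n))"
      by (simp add: D_def)
    then show ?thesis
      using cInf_less_iff[OF _ bdd] assms(3) by (auto simp: N_def)
  qed
  then obtain xs where xs_in: "\<And>n. xs n \<in> S"
    and xs_norm: "\<And>n. (norm (xs n))\<^sup>2 < D + inverse (real (Suc n))"
    by metis
  then have "Cauchy xs"
    using Cauchy_if_minimizing_in_convex[OF \<open>convex S\<close>] D_le by blast
  then obtain z where lim: "xs \<longlonglongrightarrow> z"
    using Cauchy_convergent_iff convergent_def by blast
  have "z \<in> S"
    using closed_sequentially[OF assms(1)] xs_in lim by blast
  have "(\<lambda>n. (norm (xs n))\<^sup>2) \<longlonglongrightarrow> (norm z)\<^sup>2"
    by (intro tendsto_intros lim)
  moreover have "(\<lambda>n. D + inverse (real (Suc n))) \<longlonglongrightarrow> D + 0"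
    by (intro tendsto_intros LIMSEQ_inverse_real_of_nat)
  ultimately have "(norm z)\<^sup>2 \<le> D + 0"
    by (rule LIMSEQ_le) (use xs_norm less_imp_le in blast)
  then have "norm z \<le> norm a" if "a \<in> S" for a
    using D_le[OF that] by (simp add: power2_le_imp_le)
  with \<open>z \<in> S\<close> show ?thesis
    by blast
qed

lemma cinner_eq_0_if_norm_minimal:
  fixes z w :: "'a::complex_hilbert"
  assumes min: "\<And>t. norm z \<le> norm (z + cscale t w)"
  shows "cinner z w = 0"
proof (cases "w = 0")
  case True
  then show ?thesis by simp
next
  case False
  define c where "c = cinner z w"
  define s where "s = 1 / (norm w)\<^sup>2"
  define t where "t = - (complex_of_real s * cnj c)"
  have "0 < s"
    using False by (simp add: s_def)
  have t_norm: "cmod t = s * cmod c"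
    using \<open>0 < s\<close> by (simp add: t_def norm_mult)
  have "cnj c * c = complex_of_real ((cmod c)\<^sup>2)"
    using complex_norm_square[of c] by (simp only: mult.commute)
  then have t_c: "Re (cinner z (cscale t w)) = - s * (cmod c)\<^sup>2"
    by (simp add: cinner_cscale_right t_def mult.assoc flip: c_def)
  have "(norm (z + cscale t w))\<^sup>2 = (norm z)\<^sup>2 + (s * cmod c * norm w)\<^sup>2 - 2 * s * (cmod c)\<^sup>2"
    unfolding power2_norm_add norm_cscale t_norm t_c by simp
  also have "\<dots> = (norm z)\<^sup>2 - s * (cmod c)\<^sup>2"
    using False by (simp add: s_def power2_eq_square field_simps)
  finally have "(norm z)\<^sup>2 \<le> (norm z)\<^sup>2 - s * (cmod c)\<^sup>2"
    using min[of t] by (metis norm_ge_zero power_mono)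
  with \<open>0 < s\<close> show ?thesis
    by (simp add: c_def mult_le_0_iff)
qed

lemma riesz_representation:
  fixes f :: "'a::complex_hilbert \<Rightarrow> complex"
  assumes add: "\<And>x y. f (x + y) = f x + f y"
    and scale: "\<And>c x. f (cscale c x) = c * f x"
    and bounded: "\<And>x. cmod (f x) \<le> K * norm x"
  shows "\<exists>z. \<forall>x. f x = cinner z x"
proof (cases "\<forall>x. f x = 0")
  case True
  then show ?thesis
    by (intro exI[of _ 0]) simp
next
  case False
  then obtain x1 where "f x1 \<noteq> 0"
    by auto
  have "bounded_linear f"
    by (rule bounded_linear_intro[where K = K])
       (simp_all add: add scaleR_eq_cscale scale bounded mult.commute scaleR_conv_of_real)
  then have "closed {x. f x = 1}"
    by (intro closed_Collect_eq continuous_intros) (simp add: linear_continuous_on)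
  moreover have "convex {x. f x = 1}"
    by (rule convexI) (simp add: add scaleR_eq_cscale scale flip: distrib_right of_real_add)
  moreover have "cscale (1 / f x1) x1 \<in> {x. f x = 1}"
    using \<open>f x1 \<noteq> 0\<close> by (simp add: scale)
  ultimately obtain z0 where "f z0 = 1" and z0_min: "\<And>a. f a = 1 \<Longrightarrow> norm z0 \<le> norm a"
    using closed_convex_has_min_norm[of "{x. f x = 1}"] by blast
  have kernel_orth: "cinner z0 w = 0" if "f w = 0" for w
    by (rule cinner_eq_0_if_norm_minimal)
       (simp add: z0_min add scale \<open>f z0 = 1\<close> \<open>f w = 0\<close>)
  have "z0 \<noteq> 0"
    using \<open>f z0 = 1\<close> scale[of 0 z0] by auto
  have "f x = cinner (cscale (complex_of_real (1 / (norm z0)\<^sup>2)) z0) x" for x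
  proof -
    have "f (x - cscale (f x) z0) = 0"
      using add[of "x - cscale (f x) z0" "cscale (f x) z0"] by (simp add: scale \<open>f z0 = 1\<close>)
    then have "cinner z0 (x - cscale (f x) z0) = 0"
      by (rule kernel_orth)
    then have "cinner z0 x = f x * complex_of_real ((norm z0)\<^sup>2)"
      by (simp add: cinner_diff_right cinner_cscale_right cinner_self)
    then show ?thesis
      using \<open>z0 \<noteq> 0\<close> by (simp add: cinner_cscale_left)
  qed
  then show ?thesis
    by blast
qed

section \<open>Adjoints, unitaries and the von Neumann algebra\<close>

lemma adj_exists:
  fixes T :: "'a::complex_hilbert \<Rightarrow> 'a"
  assumes "bounded_clinear T"
  shows "\<exists>S. \<forall>x y. cinner (T x) y = cinner x (S y)"
proof -
  have lin: "bounded_linear T" and clin: "\<And>c x. T (cscale c x) = cscale c (T x)"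
    using assms by (auto simp: bounded_clinear_def)
  obtain K where K: "\<And>x. norm (T x) \<le> norm x * K"
    using bounded_linear.bounded[OF lin] by blast
  have "\<exists>z. \<forall>x. cinner y (T x) = cinner z x" for y
  proof (rule riesz_representation)
    show "cinner y (T (x1 + x2)) = cinner y (T x1) + cinner y (T x2)" for x1 x2
      by (simp add: linear_add[OF bounded_linear.linear[OF lin]] cinner_add_right)
    show "cinner y (T (cscale c x)) = c * cinner y (T x)" for c x
      by (simp add: clin cinner_cscale_right)
    show "cmod (cinner y (T x)) \<le> (norm y * K) * norm x" for x
      using cauchy_schwarz[of y "T x"] mult_left_mono[OF K[of x], of "norm y"]
      by (simp add: mult_ac)
  qed
  then obtain S where "\<And>y x. cinner y (T x) = cinner (S y) x"
    by metis
  then show ?thesis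
    by (metis cinner_conj)
qed

lemma cinner_adj:
  fixes T :: "'a::complex_hilbert \<Rightarrow> 'a"
  assumes "bounded_clinear T"
  shows "cinner (T x) y = cinner x (adj T y)"
proof -
  obtain S where S: "\<And>x y. cinner (T x) y = cinner x (S y)"
    using adj_exists[OF assms] by blast
  have "adj T = S"
    unfolding adj_def
  proof (rule the_equality)
    fix S' assume S': "\<forall>x y. cinner (T x) y = cinner x (S' y)"
    show "S' = S"
    proof (intro ext cinner_ext)
      show "cinner x (S' y) = cinner x (S y)" for x y
        using S' S by metis
    qed
  qed (use S in blast)
  then show ?thesis
    using S by simp
qed

lemma unitariesD:
  fixes M :: "('a::complex_hilbert \<Rightarrow> 'a) set"
  assumes vn: "von_neumann_algebra M" and U: "U \<in> unitaries M"
  shows "bounded_clinear U" "bounded_clinear (adj U)" "adj U (U x) = x" "U (adj U x) = x"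
    "norm (U x) = norm x" "norm (adj U x) = norm x"
proof -
  have "U \<in> M" and left: "adj U \<circ> U = id" and right: "U \<circ> adj U = id"
    using U by (auto simp: unitaries_def)
  then show clin: "bounded_clinear U" "bounded_clinear (adj U)"
    using vn by (auto simp: von_neumann_algebra_def)
  show inv: "adj U (U x) = x" "U (adj U x) = x" for x
    using left right by (metis comp_apply id_apply)+
  show "norm (U x) = norm x"
    by (rule norm_eq_if_cinner_self_eq) (simp add: cinner_adj[OF clin(1)] inv)
  show "norm (adj U x) = norm x"
    by (rule norm_eq_if_cinner_self_eq) (use cinner_adj[OF clin(1), of "adj U x" x] in \<open>simp add: inv\<close>)
qed

lemma symmetriesD:
  fixes M :: "('a::complex_hilbert \<Rightarrow> 'a) set"
  assumes vn: "von_neumann_algebra M" and S: "S \<in> symmetries M"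
  shows "bounded_clinear S" "S (S x) = x" "norm (S x) = norm x"
  using unitariesD[OF vn, of S] S by (auto simp: symmetries_def)

lemma von_neumann_algebra_memI:
  assumes "von_neumann_algebra M" and "bounded_clinear T"
    and "\<And>S. S \<in> commutant M \<Longrightarrow> T \<circ> S = S \<circ> T"
  shows "T \<in> M"
proof -
  have "T \<in> commutant (commutant M)"
    using assms(2,3) unfolding commutant_def[of "commutant M"] by blast
  with assms(1) show ?thesis
    by (simp add: von_neumann_algebra_def)
qed

lemma cscale_in_von_neumann_algebra:
  fixes M :: "('a::complex_hilbert \<Rightarrow> 'a) set"
  assumes "von_neumann_algebra M"
  shows "cscale l \<in> M"
proof (rule von_neumann_algebra_memI[OF assms])
  show "bounded_clinear (cscale l :: 'a \<Rightarrow> 'a)"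
    unfolding bounded_clinear_def by (simp add: bounded_linear_cscale cscale_cscale mult.commute)
qed (auto simp: commutant_def bounded_clinear_def fun_eq_iff)

lemma diff_cscale_in_von_neumann_algebra:
  fixes M :: "('a::complex_hilbert \<Rightarrow> 'a) set"
  assumes vn: "von_neumann_algebra M" and "V \<in> M"
  shows "(\<lambda>x. V x - cscale z x) \<in> M"
proof (rule von_neumann_algebra_memI[OF vn])
  have "bounded_clinear V"
    using vn \<open>V \<in> M\<close> by (auto simp: von_neumann_algebra_def)
  then show "bounded_clinear (\<lambda>x. V x - cscale z x)"
    unfolding bounded_clinear_def
    by (auto intro: bounded_linear_sub bounded_linear_cscale simp: cscale_cscale cscale_diff_right mult.commute)
  fix S assume "S \<in> commutant M"
  then have "S \<circ> V = V \<circ> S" and S_lin: "bounded_linear S"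
    and S_clin: "\<And>c x. S (cscale c x) = cscale c (S x)"
    using \<open>V \<in> M\<close> by (auto simp: commutant_def bounded_clinear_def)
  then have "S (V x) = V (S x)" for x
    by (metis comp_apply)
  then show "(\<lambda>x. V x - cscale z x) \<circ> S = S \<circ> (\<lambda>x. V x - cscale z x)"
    by (simp add: fun_eq_iff S_clin linear_diff[OF bounded_linear.linear[OF S_lin]])
qed

lemma inverse_in_von_neumann_algebra:
  fixes M :: "('a::complex_hilbert \<Rightarrow> 'a) set"
  assumes vn: "von_neumann_algebra M" and "T \<in> M" and "bounded_clinear R"
    and RT: "\<And>x. R (T x) = x" and TR: "\<And>y. T (R y) = y"
  shows "R \<in> M"
proof (rule von_neumann_algebra_memI[OF vn \<open>bounded_clinear R\<close>])
  fix S assume "S \<in> commutant M"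
  then have "S \<circ> T = T \<circ> S"
    using \<open>T \<in> M\<close> by (auto simp: commutant_def)
  then have ST: "S (T x) = T (S x)" for x
    by (metis comp_apply)
  have "R (S y) = S (R y)" for y
  proof -
    have "R (S y) = R (S (T (R y)))"
      by (simp add: TR)
    also have "\<dots> = S (R y)"
      by (simp add: ST RT)
    finally show ?thesis .
  qed
  then show "R \<circ> S = S \<circ> R"
    by auto
qed

lemma scalar_in_unitaries:
  fixes M :: "('a::complex_hilbert \<Rightarrow> 'a) set"
  assumes vn: "von_neumann_algebra M" and l: "cmod l = 1"
  shows "cscale l \<in> unitaries M"
proof -
  have "cscale l \<in> M"
    by (rule cscale_in_von_neumann_algebra[OF vn])
  then have clin: "bounded_clinear (cscale l :: 'a \<Rightarrow> 'a)"
    using vn by (auto simp: von_neumann_algebra_def)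
  have adj_eq: "adj (cscale l) y = cscale (cnj l) y" for y :: 'a
    by (rule cinner_ext) (simp add: cinner_adj[OF clin, symmetric] cinner_cscale_left cinner_cscale_right)
  have "cnj l * l = 1" "l * cnj l = 1"
    using complex_norm_square[of l] l by (simp_all add: mult.commute)
  with \<open>cscale l \<in> M\<close> show ?thesis
    by (auto simp: unitaries_def fun_eq_iff adj_eq cscale_cscale)
qed

section \<open>Invertibility under perturbation and the spectrum\<close>

definition has_inverse_bound :: "('a::real_normed_vector \<Rightarrow> 'a) \<Rightarrow> real \<Rightarrow> bool" where
  "has_inverse_bound T r \<longleftrightarrow> (\<exists>R. bounded_linear R \<and> (\<forall>x. R (T x) = x) \<and> (\<forall>y. T (R y) = y)
      \<and> (\<forall>y. norm (R y) \<le> r * norm y))"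

lemma has_inverse_bound_mono: "has_inverse_bound T r \<Longrightarrow> r \<le> r' \<Longrightarrow> has_inverse_bound T r'"
  unfolding has_inverse_bound_def by (meson mult_right_mono norm_ge_zero order_trans)

lemma bounded_linear_two_sided_inverse:
  fixes L R :: "'a::real_normed_vector \<Rightarrow> 'a"
  assumes "linear L" and RL: "\<And>x. R (L x) = x" and LR: "\<And>y. L (R y) = y"
    and bound: "\<And>y. norm (R y) \<le> K * norm y"
  shows "bounded_linear R"
proof (rule bounded_linear_intro[where K = K])
  interpret L: linear L by fact
  show "R (a + b) = R a + R b" for a b
    by (metis L.add LR RL)
  show "R (c *\<^sub>R a) = c *\<^sub>R R a" for c a
    by (metis L.scale LR RL)
qed (simp add: bound mult.commute)

text \<open>With \<open>R\<close> the inverse of \<open>T\<close>, the inverse of \<open>T + E\<close> sends \<open>y\<close> to the fixed point of the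
  contraction \<open>x \<mapsto> R y - R (E x)\<close>.\<close>

lemma has_inverse_bound_add:
  fixes T E :: "'a::banach \<Rightarrow> 'a"
  assumes "bounded_linear T" and "bounded_linear E" and inv: "has_inverse_bound T r" and "0 \<le> r"
    and E_bound: "\<And>x. norm (E x) \<le> e * norm x" and "0 \<le> e" and "e * r < 1"
  shows "has_inverse_bound (\<lambda>x. T x + E x) (r / (1 - e * r))"
proof -
  interpret T: bounded_linear T by fact
  interpret E: bounded_linear E by fact
  obtain R where "bounded_linear R" and RT: "\<And>x. R (T x) = x" and TR: "\<And>y. T (R y) = y"
    and R_bound: "\<And>y. norm (R y) \<le> r * norm y"
    using inv unfolding has_inverse_bound_def by blast
  interpret R: bounded_linear R by fact
  have contraction: "dist (R y - R (E x)) (R y - R (E x')) \<le> e * r * dist x x'" for x x' y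
  proof -
    have "dist (R y - R (E x)) (R y - R (E x')) = norm (R (E (x' - x)))"
      by (simp add: dist_norm R.diff E.diff norm_minus_commute)
    also have "\<dots> \<le> r * (e * norm (x' - x))"
      using R_bound[of "E (x' - x)"] mult_left_mono[OF E_bound \<open>0 \<le> r\<close>] by (meson order_trans)
    finally show ?thesis
      by (simp add: dist_norm norm_minus_commute mult_ac)
  qed
  have "\<exists>!x. R y - R (E x) = x" for y
    by (rule banach_fix_type[of "e * r"]) (use contraction \<open>0 \<le> e\<close> \<open>0 \<le> r\<close> \<open>e * r < 1\<close> in auto)
  then obtain R' where fixed: "\<And>y. R y - R (E (R' y)) = R' y"
    and unique: "\<And>x y. R y - R (E x) = x \<Longrightarrow> R' y = x"
    by metis
  have right: "T (R' y) + E (R' y) = y" for y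
    using arg_cong[OF fixed[of y], of T] by (simp add: T.diff TR algebra_simps)
  have left: "R' (T x + E x) = x" for x
    by (rule unique) (simp add: R.add RT)
  have bound: "norm (R' y) \<le> (r / (1 - e * r)) * norm y" for y
  proof -
    have "norm (R' y) \<le> norm (R y) + norm (R (E (R' y)))"
      using fixed[of y] norm_triangle_ineq4[of "R y" "R (E (R' y))"] by simp
    also have "\<dots> \<le> r * norm y + r * (e * norm (R' y))"
      using R_bound[of y] R_bound[of "E (R' y)"] mult_left_mono[OF E_bound[of "R' y"] \<open>0 \<le> r\<close>]
      by linarith
    finally have "(1 - e * r) * norm (R' y) \<le> r * norm y"
      by (simp add: algebra_simps)
    then show ?thesis
      using \<open>e * r < 1\<close> by (simp add: field_simps)
  qed
  have "bounded_linear R'"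
    by (rule bounded_linear_two_sided_inverse[OF _ left right bound])
       (intro bounded_linear.linear bounded_linear_add T.bounded_linear E.bounded_linear)
  then show ?thesis
    unfolding has_inverse_bound_def using left right bound by blast
qed

lemma has_inverse_bound_add_small:
  fixes T E :: "'a::banach \<Rightarrow> 'a"
  assumes "bounded_linear T" and "bounded_linear E" and "has_inverse_bound T r" and "0 < r"
    and "\<And>x. norm (E x) \<le> e * norm x" and "0 \<le> e" and "e * r \<le> 1/2"
  shows "has_inverse_bound (\<lambda>x. T x + E x) (2 * r)"
proof (rule has_inverse_bound_mono)
  show "has_inverse_bound (\<lambda>x. T x + E x) (r / (1 - e * r))"
    using assms by (intro has_inverse_bound_add) auto
  show "r / (1 - e * r) \<le> 2 * r"
    using assms by (simp add: field_simps)
qed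

lemma not_in_spectrum_inI:
  fixes M :: "('a::complex_hilbert \<Rightarrow> 'a) set"
  assumes vn: "von_neumann_algebra M" and "V \<in> M"
    and "has_inverse_bound (\<lambda>x. V x - cscale z x) r"
  shows "z \<notin> spectrum_in M V"
proof -
  let ?T = "\<lambda>x. V x - cscale z x"
  obtain R where "bounded_linear R" and RT: "\<And>x. R (?T x) = x" and TR: "\<And>y. ?T (R y) = y"
    using assms(3) unfolding has_inverse_bound_def by blast
  have "?T \<in> M"
    by (rule diff_cscale_in_von_neumann_algebra[OF vn \<open>V \<in> M\<close>])
  then have T_clin: "?T (cscale c x) = cscale c (?T x)" for c x
    using vn by (auto simp: von_neumann_algebra_def bounded_clinear_def)
  have "R (cscale c y) = cscale c (R y)" for c y
    by (metis RT TR T_clin)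
  with \<open>bounded_linear R\<close> have "bounded_clinear R"
    by (simp add: bounded_clinear_def)
  with \<open>?T \<in> M\<close> have "R \<in> M"
    using inverse_in_von_neumann_algebra[OF vn] RT TR by blast
  moreover have "R \<circ> ?T = id" "?T \<circ> R = id"
    using RT TR by (auto simp: fun_eq_iff)
  ultimately show ?thesis
    by (auto simp: spectrum_in_def)
qed

lemma has_inverse_bound_if_not_in_spectrum_in:
  fixes M :: "('a::complex_hilbert \<Rightarrow> 'a) set"
  assumes vn: "von_neumann_algebra M" and "z \<notin> spectrum_in M U"
  shows "\<exists>r>0. has_inverse_bound (\<lambda>x. U x - cscale z x) r"
proof -
  obtain S where "S \<in> M" and ST: "S \<circ> (\<lambda>x. U x - cscale z x) = id"
    and TS: "(\<lambda>x. U x - cscale z x) \<circ> S = id"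
    using assms(2) unfolding spectrum_in_def by blast
  have "bounded_linear S"
    using vn \<open>S \<in> M\<close> by (auto simp: von_neumann_algebra_def bounded_clinear_def)
  then obtain r where "r > 0" and "\<And>y. norm (S y) \<le> norm y * r"
    using bounded_linear.pos_bounded by blast
  moreover have "S (U x - cscale z x) = x" "U (S y) - cscale z (S y) = y" for x y
    using fun_cong[OF ST, of x] fun_cong[OF TS, of y] by simp_all
  ultimately have "has_inverse_bound (\<lambda>x. U x - cscale z x) r"
    using \<open>bounded_linear S\<close> unfolding has_inverse_bound_def by (auto simp: mult.commute)
  with \<open>r > 0\<close> show ?thesis
    by blast
qed

text \<open>Off the unit circle, \<open>V - z\<close> is a small perturbation of either \<open>V\<close> or \<open>-z\<close>.\<close>

lemma spectrum_in_unitaries_subset_circle: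
  fixes M :: "('a::complex_hilbert \<Rightarrow> 'a) set"
  assumes vn: "von_neumann_algebra M" and V: "V \<in> unitaries M"
  shows "spectrum_in M V \<subseteq> {z. cmod z = 1}"
proof
  fix z assume z: "z \<in> spectrum_in M V"
  note V_props = unitariesD[OF vn V]
  have V_lin: "bounded_linear V"
    using V_props(1) by (simp add: bounded_clinear_def)
  have "V \<in> M"
    using V by (simp add: unitaries_def)
  show "z \<in> {z. cmod z = 1}"
  proof (rule ccontr)
    assume "z \<notin> {z. cmod z = 1}"
    then consider "cmod z < 1" | "cmod z > 1"
      by fastforce
    then have "\<exists>r. has_inverse_bound (\<lambda>x. V x - cscale z x) r"
    proof cases
      case 1
      have "has_inverse_bound V 1"
        unfolding has_inverse_bound_def using V_props(2-6)
        by (intro exI[of _ "adj V"]) (simp add: bounded_clinear_def)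
      then have "has_inverse_bound (\<lambda>x. V x + cscale (- z) x) (1 / (1 - cmod z * 1))"
        using 1 by (intro has_inverse_bound_add V_lin bounded_linear_cscale) (auto simp: norm_cscale)
      then show ?thesis
        by (auto simp: cscale_minus_left)
    next
      case 2
      then have "z \<noteq> 0"
        by auto
      then have "has_inverse_bound (cscale (- z)) (1 / cmod z)"
        unfolding has_inverse_bound_def
        by (intro exI[of _ "cscale (- 1 / z)"])
           (simp add: bounded_linear_cscale cscale_cscale norm_cscale norm_divide)
      then have "has_inverse_bound (\<lambda>x. cscale (- z) x + V x) ((1 / cmod z) / (1 - 1 * (1 / cmod z)))"
        using 2 by (intro has_inverse_bound_add V_lin bounded_linear_cscale) (auto simp: V_props(5) divide_less_eq)
      then show ?thesis
        by (auto simp: cscale_minus_left)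
    qed
    then show False
      using z not_in_spectrum_inI[OF vn \<open>V \<in> M\<close>] by blast
  qed
qed

lemma has_inverse_bound_diff_cscale_near:
  fixes U :: "'a::complex_hilbert \<Rightarrow> 'a"
  assumes "bounded_linear U" and "has_inverse_bound (\<lambda>x. U x - cscale z x) r" and "0 < r"
    and "cmod (z - w) * r \<le> 1/2"
  shows "has_inverse_bound (\<lambda>x. U x - cscale w x) (2 * r)"
proof -
  have "has_inverse_bound (\<lambda>x. (U x - cscale z x) + cscale (z - w) x) (2 * r)"
    using assms
    by (intro has_inverse_bound_add_small[where e = "cmod (z - w)"] bounded_linear_sub
        bounded_linear_cscale) (auto simp: norm_cscale)
  then show ?thesis
    by (simp add: cscale_diff_left)
qed

lemma uniform_inverse_bound_on_compact:
  fixes U :: "'a::complex_hilbert \<Rightarrow> 'a"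
  assumes "bounded_linear U" and "compact K"
    and local: "\<And>z. z \<in> K \<Longrightarrow> \<exists>r>0. has_inverse_bound (\<lambda>x. U x - cscale z x) r"
  shows "\<exists>r>0. \<forall>z\<in>K. has_inverse_bound (\<lambda>x. U x - cscale z x) r"
proof -
  obtain rad where rad: "\<And>z. z \<in> K \<Longrightarrow> rad z > 0 \<and> has_inverse_bound (\<lambda>x. U x - cscale z x) (rad z)"
    using local by metis
  have "z \<in> ball z (1 / (2 * rad z))" if "z \<in> K" for z
    using rad[OF that] by simp
  then have "K \<subseteq> (\<Union>z\<in>K. ball z (1 / (2 * rad z)))"
    by blast
  then obtain F where "F \<subseteq> K" and "finite F" and cover: "K \<subseteq> (\<Union>z\<in>F. ball z (1 / (2 * rad z)))"
    using compactE_image[OF \<open>compact K\<close>, of K "\<lambda>z. ball z (1 / (2 * rad z))"] by blast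
  define r where "r = 1 + (\<Sum>z\<in>F. 2 * rad z)"
  have rad_le: "2 * rad z \<le> r" if "z \<in> F" for z
  proof -
    have "2 * rad z \<le> (\<Sum>z\<in>F. 2 * rad z)"
      using \<open>F \<subseteq> K\<close> \<open>finite F\<close> that rad by (intro member_le_sum) (auto simp: less_imp_le)
    then show ?thesis
      by (simp add: r_def)
  qed
  have "0 \<le> (\<Sum>z\<in>F. 2 * rad z)"
    using \<open>F \<subseteq> K\<close> rad by (intro sum_nonneg) (auto simp: less_imp_le)
  then have "r > 0"
    by (simp add: r_def)
  moreover have "has_inverse_bound (\<lambda>x. U x - cscale w x) r" if "w \<in> K" for w
  proof -
    obtain z where "z \<in> F" and "dist z w < 1 / (2 * rad z)"
      using cover \<open>w \<in> K\<close> by auto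
    moreover have "rad z > 0" "has_inverse_bound (\<lambda>x. U x - cscale z x) (rad z)"
      using rad \<open>z \<in> F\<close> \<open>F \<subseteq> K\<close> by auto
    ultimately have "has_inverse_bound (\<lambda>x. U x - cscale w x) (2 * rad z)"
      by (intro has_inverse_bound_diff_cscale_near \<open>bounded_linear U\<close>)
         (auto simp: dist_norm field_simps)
    then show ?thesis
      using has_inverse_bound_mono rad_le[OF \<open>z \<in> F\<close>] by blast
  qed
  ultimately show ?thesis
    by blast
qed

lemma spectrum_in_disjoint_near:
  fixes M :: "('a::complex_hilbert \<Rightarrow> 'a) set"
  assumes vn: "von_neumann_algebra M" and "U \<in> M" and "compact K"
    and "spectrum_in M U \<inter> K = {}"
  shows "\<exists>e>0. \<forall>V\<in>M. onorm (\<lambda>x. V x - U x) < e \<longrightarrow> spectrum_in M V \<inter> K = {}"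
proof -
  have lin: "bounded_linear T" if "T \<in> M" for T
    using vn that by (auto simp: von_neumann_algebra_def bounded_clinear_def)
  obtain r where "r > 0" and r: "\<And>z. z \<in> K \<Longrightarrow> has_inverse_bound (\<lambda>x. U x - cscale z x) r"
    using uniform_inverse_bound_on_compact[OF lin[OF \<open>U \<in> M\<close>] \<open>compact K\<close>]
      has_inverse_bound_if_not_in_spectrum_in[OF vn] assms(4) by blast
  have "spectrum_in M V \<inter> K = {}" if "V \<in> M" and close: "onorm (\<lambda>x. V x - U x) < 1 / r" for V
  proof -
    have diff_lin: "bounded_linear (\<lambda>x. V x - U x)"
      using lin \<open>V \<in> M\<close> \<open>U \<in> M\<close> by (intro bounded_linear_sub)
    have "z \<notin> spectrum_in M V" if "z \<in> K" for z
    proof (rule not_in_spectrum_inI[OF vn \<open>V \<in> M\<close>])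
      define e where "e = onorm (\<lambda>x. V x - U x)"
      have "has_inverse_bound (\<lambda>x. (U x - cscale z x) + (V x - U x)) (r / (1 - e * r))"
      proof (rule has_inverse_bound_add)
        show "bounded_linear (\<lambda>x. U x - cscale z x)"
          by (intro bounded_linear_sub lin[OF \<open>U \<in> M\<close>] bounded_linear_cscale)
        show "has_inverse_bound (\<lambda>x. U x - cscale z x) r"
          by (rule r[OF \<open>z \<in> K\<close>])
        show "norm (V x - U x) \<le> e * norm x" for x
          using onorm[OF diff_lin] by (simp add: e_def)
        show "0 \<le> e"
          using onorm_pos_le[OF diff_lin] by (simp add: e_def)
        show "e * r < 1"
          using close \<open>r > 0\<close> by (simp add: e_def field_simps)
      qed (use diff_lin \<open>r > 0\<close> in auto)
      then show "has_inverse_bound (\<lambda>x. V x - cscale z x) (r / (1 - e * r))"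
        by simp
    qed
    then show ?thesis
      by blast
  qed
  with \<open>r > 0\<close> show ?thesis
    by (intro exI[of _ "1 / r"]) auto
qed

section \<open>Arcs of the unit circle\<close>

definition turn :: "real \<Rightarrow> complex" where
  "turn a = exp (2 * of_real pi * \<i> * of_real a)"

lemma turn_eq_cis: "turn a = cis (2 * pi * a)"
  by (simp add: turn_def cis_conv_exp mult_ac)

lemma norm_turn [simp]: "cmod (turn a) = 1"
  by (simp add: turn_eq_cis)

lemma continuous_on_turn: "continuous_on S turn"
  unfolding turn_def by (intro continuous_intros)

lemma turn_eq_turn_iff: "turn a = turn b \<longleftrightarrow> (\<exists>n::int. a = b + of_int n)"
proof
  assume "turn a = turn b"
  then obtain n :: int
    where "2 * of_real pi * \<i> * of_real a = 2 * of_real pi * \<i> * of_real b + of_int (2 * n) * pi * \<i>"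
    unfolding turn_def exp_eq by blast
  from arg_cong[OF this, of Im] have "2 * pi * a = 2 * pi * b + 2 * n * pi"
    by simp
  then have "pi * (2 * (a - (b + n))) = 0"
    by (simp add: algebra_simps)
  then have "a = b + n"
    by simp
  then show "\<exists>n::int. a = b + of_int n"
    by blast
next
  assume "\<exists>n::int. a = b + of_int n"
  then obtain n :: int where "a = b + of_int n"
    by blast
  then show "turn a = turn b"
    unfolding turn_def exp_eq by (intro exI[of _ n]) (simp add: algebra_simps)
qed

lemma circle_eq_range_turn: "{z. cmod z = 1} = range turn"
proof -
  have "z \<in> range turn" if "cmod z = 1" for z
  proof -
    obtain t where "z = Complex (cos t) (sin t)"
      using complex_unimodular_polar \<open>cmod z = 1\<close> by blast
    then have "z = turn (t / (2 * pi))"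
      by (simp add: turn_eq_cis complex_eq_iff)
    then show ?thesis
      by blast
  qed
  then show ?thesis
    by auto
qed

lemma arc_eq_image_turn: "arc k = turn ` {(real k - 1) / 4 <..< real k / 4}"
  unfolding arc_def turn_def by auto

lemma circle_diff_arc: "{z. cmod z = 1} - arc k = turn ` {real k / 4 .. (real k + 3) / 4}"
proof
  show "{z. cmod z = 1} - arc k \<subseteq> turn ` {real k / 4 .. (real k + 3) / 4}"
  proof
    fix z assume z: "z \<in> {z. cmod z = 1} - arc k"
    then obtain a where "z = turn a"
      using circle_eq_range_turn by blast
    define b where "b = a + of_int \<lceil>real k / 4 - a\<rceil>"
    have "real k / 4 \<le> b" "b < real k / 4 + 1"
      unfolding b_def by linarith+
    have "z = turn b"
      using \<open>z = turn a\<close> turn_eq_turn_iff[of b a] by (auto simp: b_def)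
    have "b \<le> (real k + 3) / 4"
    proof (rule ccontr)
      assume "\<not> b \<le> (real k + 3) / 4"
      then have "b - 1 \<in> {(real k - 1) / 4 <..< real k / 4}"
        using \<open>b < real k / 4 + 1\<close> by auto
      moreover have "turn (b - 1) = z"
        using \<open>z = turn b\<close> turn_eq_turn_iff[of "b - 1" b] by (metis diff_conv_add_uminus of_int_1 of_int_minus)
      ultimately show False
        using z by (auto simp: arc_eq_image_turn)
    qed
    with \<open>real k / 4 \<le> b\<close> \<open>z = turn b\<close> show "z \<in> turn ` {real k / 4 .. (real k + 3) / 4}"
      by auto
  qed
next
  have "turn b \<notin> arc k" if "b \<in> {real k / 4 .. (real k + 3) / 4}" for b
  proof
    assume "turn b \<in> arc k"
    then obtain a where "a \<in> {(real k - 1) / 4 <..< real k / 4}" "turn b = turn a"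
      by (auto simp: arc_eq_image_turn)
    moreover from this obtain n :: int where "b = a + of_int n"
      using turn_eq_turn_iff by metis
    ultimately have "0 < n" "n < 1"
      using that by auto
    then show False
      by linarith
  qed
  then show "turn ` {real k / 4 .. (real k + 3) / 4} \<subseteq> {z. cmod z = 1} - arc k"
    by auto
qed

lemma compact_circle_diff_arc: "compact ({z. cmod z = 1} - arc k)"
  unfolding circle_diff_arc by (intro compact_continuous_image compact_Icc continuous_on_turn)

lemma norm_open_in_unitaries_spectrum_in_arc:
  fixes M :: "('a::complex_hilbert \<Rightarrow> 'a) set"
  assumes vn: "von_neumann_algebra M"
  shows "norm_open_in (unitaries M) {U\<in>unitaries M. \<exists>k\<in>{1,2,3,4}. spectrum_in M U \<subseteq> arc k}"
  unfolding norm_open_in_def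
proof (intro conjI ballI)
  fix U assume "U \<in> {U\<in>unitaries M. \<exists>k\<in>{1,2,3,4}. spectrum_in M U \<subseteq> arc k}"
  then obtain k where U: "U \<in> unitaries M" and "k \<in> {1,2,3,4}" and "spectrum_in M U \<subseteq> arc k"
    by blast
  let ?K = "{z. cmod z = 1} - arc k"
  have "spectrum_in M U \<inter> ?K = {}"
    using \<open>spectrum_in M U \<subseteq> arc k\<close> by blast
  moreover have "U \<in> M"
    using U by (simp add: unitaries_def)
  ultimately obtain e where "e > 0"
    and near: "\<forall>V\<in>M. onorm (\<lambda>x. V x - U x) < e \<longrightarrow> spectrum_in M V \<inter> ?K = {}"
    using spectrum_in_disjoint_near[OF vn _ compact_circle_diff_arc, of U k] by auto
  have "spectrum_in M V \<subseteq> arc k" if "V \<in> unitaries M" and "onorm (\<lambda>x. V x - U x) < e" for V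
    using near spectrum_in_unitaries_subset_circle[OF vn \<open>V \<in> unitaries M\<close>] that
    by (auto simp: unitaries_def)
  with \<open>e > 0\<close> \<open>k \<in> {1,2,3,4}\<close>
  show "\<exists>e>0. \<forall>V\<in>unitaries M. onorm (\<lambda>x. V x - U x) < e \<longrightarrow>
      V \<in> {U\<in>unitaries M. \<exists>k\<in>{1,2,3,4}. spectrum_in M U \<subseteq> arc k}"
    by blast
qed blast

section \<open>Products of three symmetries\<close>

lemma near_scalar_inverse:
  fixes P Q :: "'a::complex_hilbert \<Rightarrow> 'a"
  assumes near: "\<And>x. norm (P x - cscale \<mu> x) \<le> \<delta> * norm x" and "cmod \<mu> = 1"
    and PQ: "\<And>x. P (Q x) = x" and Q_iso: "\<And>x. norm (Q x) = norm x"
  shows "norm (Q x - cscale (cnj \<mu>) x) \<le> \<delta> * norm x"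
proof -
  have "cnj \<mu> * \<mu> = 1"
    using complex_norm_square[of \<mu>] \<open>cmod \<mu> = 1\<close> by (simp add: mult.commute)
  then have "Q x - cscale (cnj \<mu>) x = cscale (- cnj \<mu>) (P (Q x) - cscale \<mu> (Q x))"
    by (simp add: PQ cscale_diff_right cscale_cscale cscale_minus_left)
  then show ?thesis
    using near[of "Q x"] \<open>cmod \<mu> = 1\<close> by (simp add: norm_cscale Q_iso)
qed

lemma near_scalars_dist_le:
  fixes Q :: "'a::complex_hilbert \<Rightarrow> 'a" and w :: 'a
  assumes "norm (Q w - cscale \<mu> w) \<le> \<delta> * norm w" and "norm (Q w - cscale \<nu> w) \<le> \<delta>' * norm w"
    and "w \<noteq> 0"
  shows "cmod (\<mu> - \<nu>) \<le> \<delta> + \<delta>'"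
proof -
  have "cmod (\<mu> - \<nu>) * norm w = norm (cscale (\<mu> - \<nu>) w)"
    by (simp add: norm_cscale)
  also have "cscale (\<mu> - \<nu>) w = (Q w - cscale \<nu> w) - (Q w - cscale \<mu> w)"
    by (simp add: cscale_diff_left)
  also have "norm \<dots> \<le> norm (Q w - cscale \<nu> w) + norm (Q w - cscale \<mu> w)"
    by (rule norm_triangle_ineq4)
  also have "\<dots> \<le> (\<delta> + \<delta>') * norm w"
    using assms(1,2) by (simp add: distrib_right)
  finally show ?thesis
    using \<open>w \<noteq> 0\<close> by simp
qed

lemma square_near_scalar_if_involution_near:
  fixes P C :: "'a::complex_hilbert \<Rightarrow> 'a"
  assumes P_diff: "\<And>x y. P (x - y) = P x - P y" and P_scale: "\<And>c x. P (cscale c x) = cscale c (P x)"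
    and P_iso: "\<And>x. norm (P x) = norm x"
    and CC: "\<And>x. C (C x) = x" and C_iso: "\<And>x. norm (C x) = norm x"
    and "cmod l = 1" and C_near: "\<And>x. norm (C x - cscale l (P x)) \<le> \<epsilon> * norm x"
  shows "norm (P (P x) - cscale (cnj l ^ 2) x) \<le> 2 * \<epsilon> * norm x"
proof -
  have "x - cscale (l\<^sup>2) (P (P x)) = (C (C x) - cscale l (P (C x))) + cscale l (P (C x - cscale l (P x)))"
    by (simp add: CC P_diff P_scale cscale_diff_right cscale_cscale power2_eq_square)
  then have "norm (x - cscale (l\<^sup>2) (P (P x)))
      \<le> norm (C (C x) - cscale l (P (C x))) + norm (cscale l (P (C x - cscale l (P x))))"
    by (metis norm_triangle_ineq)
  also have "\<dots> = norm (C (C x) - cscale l (P (C x))) + norm (C x - cscale l (P x))"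
    using \<open>cmod l = 1\<close> by (simp add: norm_cscale P_iso)
  also have "\<dots> \<le> 2 * \<epsilon> * norm x"
    using C_near[of "C x"] C_near[of x] by (simp add: C_iso)
  finally have "norm (x - cscale (l\<^sup>2) (P (P x))) \<le> 2 * \<epsilon> * norm x" .
  moreover have "cnj l * l = 1"
    using complex_norm_square[of l] \<open>cmod l = 1\<close> by (simp add: mult.commute)
  then have "P (P x) - cscale (cnj l ^ 2) x = cscale (- (cnj l ^ 2)) (x - cscale (l\<^sup>2) (P (P x)))"
    by (simp add: cscale_diff_right cscale_cscale cscale_minus_left power_mult_distrib[symmetric])
  ultimately show ?thesis
    using \<open>cmod l = 1\<close> by (simp add: norm_cscale norm_power)
qed

lemma three_involutions_near_scalar:
  fixes A B C :: "'a::complex_hilbert \<Rightarrow> 'a" and w :: 'a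
  assumes "bounded_clinear A" and "bounded_clinear B"
    and AA: "\<And>x. A (A x) = x" and BB: "\<And>x. B (B x) = x" and CC: "\<And>x. C (C x) = x"
    and A_iso: "\<And>x. norm (A x) = norm x" and B_iso: "\<And>x. norm (B x) = norm x"
    and C_iso: "\<And>x. norm (C x) = norm x"
    and "cmod l = 1" and near: "\<And>x. norm (A (B (C x)) - cscale l x) \<le> \<epsilon> * norm x"
    and "w \<noteq> 0"
  shows "\<bar>Im (l\<^sup>2)\<bar> \<le> 2 * \<epsilon>"
proof -
  have A_diff: "A (x - y) = A x - A y" and B_diff: "B (x - y) = B x - B y" for x y
    using \<open>bounded_clinear A\<close> \<open>bounded_clinear B\<close>
    by (simp_all add: bounded_clinear_def linear_diff bounded_linear.linear)
  have A_scale: "A (cscale c x) = cscale c (A x)" and B_scale: "B (cscale c x) = cscale c (B x)" for c x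
    using \<open>bounded_clinear A\<close> \<open>bounded_clinear B\<close> by (simp_all add: bounded_clinear_def)
  define \<mu> where "\<mu> = cnj l ^ 2"
  have "cmod \<mu> = 1"
    using \<open>cmod l = 1\<close> by (simp add: \<mu>_def norm_power)
  have C_near: "norm (C x - cscale l (B (A x))) \<le> \<epsilon> * norm x" for x
  proof -
    have "C x - cscale l (B (A x)) = B (A (A (B (C x)) - cscale l x))"
      by (simp add: A_diff B_diff A_scale B_scale AA BB)
    then show ?thesis
      using near[of x] by (simp add: A_iso B_iso)
  qed
  have BABA_near: "norm (B (A (B (A x))) - cscale \<mu> x) \<le> 2 * \<epsilon> * norm x" for x
    unfolding \<mu>_def
    by (rule square_near_scalar_if_involution_near[where C = C, OF _ _ _ CC C_iso \<open>cmod l = 1\<close> C_near])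
       (simp_all add: A_diff B_diff A_scale B_scale A_iso B_iso)
  have ABAB_near: "norm (A (B (A (B w))) - cscale \<mu> w) \<le> 2 * \<epsilon> * norm w"
  proof -
    have "A (B (A (B w))) - cscale \<mu> w = B (B (A (B (A (B w)))) - cscale \<mu> (B w))"
      by (simp add: B_diff B_scale BB)
    then show ?thesis
      using BABA_near[of "B w"] by (simp add: B_iso)
  qed
  have ABAB_near_cnj: "norm (A (B (A (B w))) - cscale (cnj \<mu>) w) \<le> 2 * \<epsilon> * norm w"
    by (rule near_scalar_inverse[OF BABA_near \<open>cmod \<mu> = 1\<close>]) (simp_all add: AA BB A_iso B_iso)
  have "cmod (\<mu> - cnj \<mu>) \<le> 2 * \<epsilon> + 2 * \<epsilon>"
    by (rule near_scalars_dist_le[where Q = "\<lambda>x. A (B (A (B x)))", OF ABAB_near ABAB_near_cnj \<open>w \<noteq> 0\<close>])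
  moreover have "cmod (\<mu> - cnj \<mu>) = 2 * \<bar>Im (l\<^sup>2)\<bar>"
    using complex_diff_cnj[of "l\<^sup>2"] by (simp add: \<mu>_def norm_minus_commute norm_mult)
  ultimately show ?thesis
    by simp
qed

lemma scalar_not_in_norm_closure_sym_cube:
  fixes M :: "('a::complex_hilbert \<Rightarrow> 'a) set"
  assumes vn: "von_neumann_algebra M" and "\<exists>x::'a. x \<noteq> 0"
  shows "cscale (cis (pi / 4)) \<notin> norm_closure (sym_cube M)"
proof
  define l where "l = cis (pi / 4)"
  assume "cscale (cis (pi / 4)) \<in> norm_closure (sym_cube M)"
  then have "\<forall>e>0. \<exists>S\<in>sym_cube M. onorm (\<lambda>x. S x - cscale l x) < e"
    by (simp add: norm_closure_def l_def)
  then obtain U where "U \<in> sym_cube M" and close: "onorm (\<lambda>x. U x - cscale l x) < 1/2"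
    by (meson half_gt_zero zero_less_one)
  then obtain A B C where A: "A \<in> symmetries M" and B: "B \<in> symmetries M"
    and C: "C \<in> symmetries M" and "U = A \<circ> B \<circ> C" and "U \<in> unitaries M"
    by (auto simp: sym_cube_def)
  have "bounded_linear U"
    using unitariesD(1)[OF vn \<open>U \<in> unitaries M\<close>] by (simp add: bounded_clinear_def)
  then have "bounded_linear (\<lambda>x. U x - cscale l x)"
    by (intro bounded_linear_sub bounded_linear_cscale)
  then have near: "norm (A (B (C x)) - cscale l x) \<le> onorm (\<lambda>x. U x - cscale l x) * norm x" for x
    using onorm by (simp add: \<open>U = A \<circ> B \<circ> C\<close>)
  obtain w :: 'a where "w \<noteq> 0"
    using assms(2) by blast
  have "\<bar>Im (l\<^sup>2)\<bar> \<le> 2 * onorm (\<lambda>x. U x - cscale l x)"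
    using symmetriesD[OF vn A] symmetriesD[OF vn B] symmetriesD[OF vn C] near \<open>w \<noteq> 0\<close>
    by (intro three_involutions_near_scalar[of A B C]) (auto simp: l_def)
  moreover have "l\<^sup>2 = cis (pi / 4 + pi / 4)"
    by (simp add: l_def power2_eq_square cis_mult)
  then have "l\<^sup>2 = \<i>"
    by simp
  ultimately show False
    using close by simp
qed

theorem theorem4p7:
  fixes M :: "('a::complex_hilbert \<Rightarrow> 'a) set"
  assumes "von_neumann_algebra M"
    and "\<exists>x::'a. x \<noteq> 0"
  shows "norm_open_in (unitaries M)
           {U\<in>unitaries M. \<exists>k\<in>{1,2,3,4}. spectrum_in M U \<subseteq> arc k}
         \<and> norm_closure (sym_cube M) \<noteq> unitaries M"
proof
  show "norm_open_in (unitaries M) {U\<in>unitaries M. \<exists>k\<in>{1,2,3,4}. spectrum_in M U \<subseteq> arc k}"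
    by (rule norm_open_in_unitaries_spectrum_in_arc[OF assms(1)])
  have "cscale (cis (pi / 4)) \<in> unitaries M"
    by (rule scalar_in_unitaries[OF assms(1)]) simp
  then show "norm_closure (sym_cube M) \<noteq> unitaries M"
    using scalar_not_in_norm_closure_sym_cube[OF assms] by blast
qed

end
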